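(* Assume $\mathcal R_0>1$ and let $$\lambda>\frac{\big(\beta_E\nu\nu_E-(\nu_E+\delta_E)\delta_F\big)\delta_s}{\gamma_s(\nu_E+\delta_E)\delta_F}.$$ Then $\mathcal M:=\mathcal M(\overline\kappa)$ is positively invariant and $\mathbf 0$ is globally asymptotically stable in $\mathcal M$ (in the Filippov sense) for the closed-loop system $$\dot E=\beta_E F\Big(1-\frac EK\Big)-(\nu_E+\delta_E)E,\quad \dot M=(1-\nu)\nu_E E-\delta_M M,\quad \dot F=\nu\nu_E E\frac{M}{M+\gamma_sM_s}-\delta_F F,\quad \dot M_s=\lambda M-\delta_sM_s.$$
   Context: Parameters: $\beta_E,\nu_E,\delta_E,\delta_M,\delta_F,\delta_s,K>0$, $\nu\in(0,1)$, $\gamma_s\in(0,1]$, $\delta_s\ge\delta_M$. $\mathcal R_0:=\dfrac{\beta_E\nu\nu_E}{\delta_F(\nu_E+\delta_E)}$. $\mathcal D'=[0,+\infty)^4$, $z=(E,M,F,M_s)^T$. $\overline\kappa:=\dfrac{\gamma_s\delta_F(\nu_E+\delta_E)}{\beta_E\nu\nu_E-\delta_F(\nu_E+\delta_E)}$. $\mathcal T_1=\{z\in\mathcal D':\beta_EF(1-E/K)\le(\nu_E+\delta_E)E\}$, $\mathcal T_2(\kappa)=\{z\in\mathcal D':M\le\kappa M_s\}$, $\mathcal T_3=\{z\in\mathcal D':(1-\nu)\nu_EE\le\delta_MM\}$, $\mathcal M(\kappa)=\mathcal T_1\cap\mathcal T_2(\kappa)\cap\mathcal T_3$. Filippov solutions: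 locally Lipschitz $z:I\to\mathcal D'$ with $\dot z(t)\in\bigcap_{\varepsilon>0}\bigcap_{N}\overline{\mathrm{conv}}\,X\big(((z(t)+\varepsilon B)\cap\mathcal D')\setminus N\big)$ for a.e. $t$ ($X$ the closed-loop right-hand side, $B$ unit ball of $\mathbb R^4$, $N$ Lebesgue-null). Globally asymptotically stable in $\mathcal S$: for every $\varepsilon>0$ there is $\delta>0$ such that every Filippov solution with $z(0)\in\mathcal S$, $\|z(0)\|<\delta$ satisfies $\|z(t)\|<\varepsilon$ for all $t>0$, and every Filippov solution with $z(0)\in\mathcal S$ tends to $\mathbf 0$. *)

theory Defs
  imports "HOL-Analysis.Analysis"
begin

text \<open>State z = (E, M, F, M_s) is a vector in real^4 with components
  z$1 = E, z$2 = M, z$3 = F, z$4 = M_s.\<close>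

definition Dprime :: "(real^4) set" where
  "Dprime = {z. \<forall>i. z $ i \<ge> 0}"

definition vec4 :: "real \<Rightarrow> real \<Rightarrow> real \<Rightarrow> real \<Rightarrow> real^4" where
  "vec4 a b c d = (\<chi> i. if i = 1 then a else if i = 2 then b else if i = 3 then c else d)"

text \<open>Closed-loop right-hand side. Where M + gamma_s M_s = 0 the quotient is 0 (Isabelle's
  division convention); this is a Lebesgue-null set, irrelevant for Filippov solutions.\<close>
definition closed_loop ::
  "real \<Rightarrow> real \<Rightarrow> real \<Rightarrow> real \<Rightarrow> real \<Rightarrow> real \<Rightarrow> real \<Rightarrow> real \<Rightarrow> real \<Rightarrow> real \<Rightarrow> real^4 \<Rightarrow> real^4" where
  "closed_loop \<beta>E \<nu>E \<delta>E \<delta>M \<delta>F \<delta>s K \<nu> \<gamma>s lam z =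
     (let E = z $ 1; M = z $ 2; F = z $ 3; Ms = z $ 4 in
      vec4 (\<beta>E * F * (1 - E / K) - (\<nu>E + \<delta>E) * E)
           ((1 - \<nu>) * \<nu>E * E - \<delta>M * M)
           (\<nu> * \<nu>E * E * (M / (M + \<gamma>s * Ms)) - \<delta>F * F)
           (lam * M - \<delta>s * Ms))"

definition filippov_set :: "(real^4 \<Rightarrow> real^4) \<Rightarrow> (real^4) set \<Rightarrow> real^4 \<Rightarrow> (real^4) set" where
  "filippov_set X D z =
     (\<Inter>\<epsilon>\<in>{0<..}. \<Inter>N\<in>null_sets lborel.
        closure (convex hull (X ` ((cball z \<epsilon> \<inter> D) - N))))"

definition locally_lipschitz_on :: "real set \<Rightarrow> (real \<Rightarrow> real^4) \<Rightarrow> bool" where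
  "locally_lipschitz_on I z \<longleftrightarrow>
     (\<forall>t\<in>I. \<exists>r>0. \<exists>L. \<forall>s1\<in>I \<inter> ball t r. \<forall>s2\<in>I \<inter> ball t r.
        dist (z s1) (z s2) \<le> L * dist s1 s2)"

definition filippov_solution ::
  "(real^4 \<Rightarrow> real^4) \<Rightarrow> (real^4) set \<Rightarrow> real set \<Rightarrow> (real \<Rightarrow> real^4) \<Rightarrow> bool" where
  "filippov_solution X D I z \<longleftrightarrow>
     is_interval I \<and> locally_lipschitz_on I z \<and> (\<forall>t\<in>I. z t \<in> D) \<and>
     (AE t in lborel. t \<in> I \<longrightarrow>
        (\<exists>v. (z has_vector_derivative v) (at t within I) \<and> v \<in> filippov_set X D (z t)))"

definition positively_invariant ::
  "(real^4 \<Rightarrow> real^4) \<Rightarrow> (real^4) set \<Rightarrow> (real^4) set \<Rightarrow> bool" where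
  "positively_invariant X D S \<longleftrightarrow>
     (\<forall>I z. filippov_solution X D I z \<and> 0 \<in> I \<and> z 0 \<in> S \<longrightarrow>
        (\<forall>t\<in>I. t \<ge> 0 \<longrightarrow> z t \<in> S))"

definition GAS_in ::
  "(real^4 \<Rightarrow> real^4) \<Rightarrow> (real^4) set \<Rightarrow> (real^4) set \<Rightarrow> bool" where
  "GAS_in X D S \<longleftrightarrow>
     (\<forall>\<epsilon>>0. \<exists>\<delta>>0. \<forall>I z. filippov_solution X D I z \<and> 0 \<in> I \<and> z 0 \<in> S \<and> norm (z 0) < \<delta> \<longrightarrow>
        (\<forall>t\<in>I. t > 0 \<longrightarrow> norm (z t) < \<epsilon>)) \<and>
     (\<forall>z. filippov_solution X D {0..} z \<and> z 0 \<in> S \<longrightarrow> (z \<longlongrightarrow> 0) at_top)"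

definition T1 :: "real \<Rightarrow> real \<Rightarrow> real \<Rightarrow> real \<Rightarrow> (real^4) set" where
  "T1 \<beta>E \<nu>E \<delta>E K = {z \<in> Dprime. \<beta>E * z$3 * (1 - z$1 / K) \<le> (\<nu>E + \<delta>E) * z$1}"

definition T2 :: "real \<Rightarrow> (real^4) set" where
  "T2 \<kappa> = {z \<in> Dprime. z$2 \<le> \<kappa> * z$4}"

definition T3 :: "real \<Rightarrow> real \<Rightarrow> real \<Rightarrow> (real^4) set" where
  "T3 \<nu> \<nu>E \<delta>M = {z \<in> Dprime. (1 - \<nu>) * \<nu>E * z$1 \<le> \<delta>M * z$2}"

definition Mset :: "real \<Rightarrow> real \<Rightarrow> real \<Rightarrow> real \<Rightarrow> real \<Rightarrow> real \<Rightarrow> real \<Rightarrow> (real^4) set" where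
  "Mset \<beta>E \<nu>E \<delta>E \<delta>M K \<nu> \<kappa> = T1 \<beta>E \<nu>E \<delta>E K \<inter> T2 \<kappa> \<inter> T3 \<nu> \<nu>E \<delta>M"

end

theory Submission
  imports Defs "HOL-Real_Asymp.Real_Asymp"
begin

text \<open>The set \<open>MM\<close> is cut out by \<open>g1 \<le> 0\<close>, \<open>g2 \<le> 0\<close>, \<open>g3 \<le> 0\<close> for the three functions
  \<open>g1 = \<beta>E F (1 - E/K) - (\<nu>E + \<delta>E) E\<close>, \<open>g2 = M - \<kappa> Ms\<close>, \<open>g3 = (1 - \<nu>) \<nu>E E - \<delta>M M\<close>.
  Each \<open>gi\<close> can only grow, while positive, at a rate controlled by the positive parts of the
  others, so the penalty \<open>V = \<Sum> (max 0 gi)\<^sup>2\<close> satisfies \<open>V' \<le> L V\<close> along Filippov solutions;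
  as \<open>V\<close> vanishes exactly on \<open>MM\<close>, Gronwall's inequality gives invariance.

  Inside \<open>MM\<close> the male fraction \<open>M / (M + \<gamma>s Ms)\<close> is at most \<open>\<kappa> / (\<kappa> + \<gamma>s)\<close>, which turns the
  female equation into the linear inequality \<open>F' \<le> \<delta>F (\<nu>E + \<delta>E) E / \<beta>E - \<delta>F F\<close>. Hence \<open>E\<close> and
  \<open>M\<close> are nonincreasing and \<open>E + \<beta>E F / \<delta>F\<close> is a Lyapunov function dissipating at rate
  \<open>\<beta>E E F / K\<close>. This bounds the solution by a multiple of its initial norm (stability) and
  forces \<open>E \<rightarrow> 0\<close>, then \<open>M \<rightarrow> 0\<close>, \<open>F \<rightarrow> 0\<close> and \<open>Ms \<rightarrow> 0\<close> (attractivity).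

  Solutions are only locally Lipschitz, so all monotonicity statements go through the fact that
  a pointwise Lipschitz function whose derivative is almost everywhere nonpositive is
  nonincreasing.\<close>

section \<open>Filippov velocities\<close>

lemma filippov_set_inner_le:
  fixes a :: "real^4"
  assumes v: "v \<in> filippov_set X D z" and h: "continuous (at z) h"
    and bound: "\<And>w. w \<in> D \<Longrightarrow> a \<bullet> X w \<le> h w"
  shows "a \<bullet> v \<le> h z"
proof (rule field_le_epsilon)
  fix \<eta> :: real assume "\<eta> > 0"
  then obtain d where "d > 0" and d: "\<And>w. dist w z < d \<Longrightarrow> \<bar>h w - h z\<bar> < \<eta>"
    using h unfolding continuous_at_eps_delta dist_real_def by blast
  have "X ` (cball z (d/2) \<inter> D) \<subseteq> {u. a \<bullet> u \<le> h z + \<eta>}"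
  proof clarify
    fix w assume "w \<in> cball z (d/2)" "w \<in> D"
    then have "\<bar>h w - h z\<bar> < \<eta>" using d \<open>d > 0\<close> by (simp add: dist_commute)
    then show "a \<bullet> X w \<le> h z + \<eta>" using bound[OF \<open>w \<in> D\<close>] by linarith
  qed
  then have "closure (convex hull (X ` (cball z (d/2) \<inter> D))) \<subseteq> {u. a \<bullet> u \<le> h z + \<eta>}"
    by (intro closure_minimal hull_minimal convex_halfspace_le closed_halfspace_le)
  moreover have "v \<in> closure (convex hull (X ` (cball z (d/2) \<inter> D)))"
    using v \<open>d > 0\<close> unfolding filippov_set_def by fastforce
  ultimately show "a \<bullet> v \<le> h z + \<eta>" by blast
qed

lemma filippov_set_component_le:
  assumes "v \<in> filippov_set X D z" "continuous (at z) h" "\<And>w. w \<in> D \<Longrightarrow> X w $ i \<le> h w"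
  shows "v $ i \<le> h z"
  using filippov_set_inner_le[of v X D z h "axis i 1"] assms by (simp add: inner_axis')

lemma filippov_set_component_ge:
  assumes "v \<in> filippov_set X D z" "continuous (at z) h" "\<And>w. w \<in> D \<Longrightarrow> h w \<le> X w $ i"
  shows "h z \<le> v $ i"
  using filippov_set_inner_le[of v X D z "\<lambda>w. - h w" "axis i (-1)"] assms
  by (simp add: inner_axis' continuous_minus)

lemma filippov_set_component_eq:
  assumes "v \<in> filippov_set X D z" "continuous (at z) h" "\<And>w. w \<in> D \<Longrightarrow> X w $ i = h w"
  shows "v $ i = h z"
  using filippov_set_component_le[OF assms(1,2)] filippov_set_component_ge[OF assms(1,2)] assms(3)
  by (metis order.refl order.antisym)

section \<open>Pointwise Lipschitz functions and monotonicity\<close>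

definition lipschitz_at :: "(real \<Rightarrow> real) \<Rightarrow> real set \<Rightarrow> real \<Rightarrow> bool" where
  "lipschitz_at f S t \<longleftrightarrow> (\<exists>r>0. \<exists>B. \<forall>s\<in>S. \<bar>s - t\<bar> < r \<longrightarrow> \<bar>f s - f t\<bar> \<le> B * \<bar>s - t\<bar>)"

lemma lipschitz_atE:
  assumes "lipschitz_at f S t"
  obtains r B where "r > 0" "B \<ge> 0" "\<And>s. s \<in> S \<Longrightarrow> \<bar>s - t\<bar> < r \<Longrightarrow> \<bar>f s - f t\<bar> \<le> B * \<bar>s - t\<bar>"
proof -
  obtain r B where "r > 0" and B: "\<And>s. s \<in> S \<Longrightarrow> \<bar>s - t\<bar> < r \<Longrightarrow> \<bar>f s - f t\<bar> \<le> B * \<bar>s - t\<bar>"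
    using assms unfolding lipschitz_at_def by blast
  have "\<bar>f s - f t\<bar> \<le> \<bar>B\<bar> * \<bar>s - t\<bar>" if "s \<in> S" "\<bar>s - t\<bar> < r" for s
    using B[OF that] abs_ge_self[of B] by (meson mult_right_mono abs_ge_zero order.trans)
  then show thesis by (rule that[OF \<open>r > 0\<close> abs_ge_zero])
qed

lemma lipschitz_atI:
  "r > 0 \<Longrightarrow> (\<And>s. s \<in> S \<Longrightarrow> \<bar>s - t\<bar> < r \<Longrightarrow> \<bar>f s - f t\<bar> \<le> B * \<bar>s - t\<bar>) \<Longrightarrow> lipschitz_at f S t"
  unfolding lipschitz_at_def by blast

lemma lipschitz_at_imp_continuous_within:
  assumes "lipschitz_at f S t"
  shows "continuous (at t within S) f"
proof -
  obtain r B where "r > 0" "B \<ge> 0" and B: "\<And>s. s \<in> S \<Longrightarrow> \<bar>s - t\<bar> < r \<Longrightarrow> \<bar>f s - f t\<bar> \<le> B * \<bar>s - t\<bar>"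
    using assms by (rule lipschitz_atE) auto
  show ?thesis
    unfolding continuous_within_eps_delta dist_real_def
  proof (intro allI impI)
    fix e :: real assume "e > 0"
    show "\<exists>d>0. \<forall>s\<in>S. \<bar>s - t\<bar> < d \<longrightarrow> \<bar>f s - f t\<bar> < e"
    proof (intro exI[of _ "min r (e / (B + 1))"] conjI ballI impI)
      show "min r (e / (B + 1)) > 0" using \<open>r > 0\<close> \<open>e > 0\<close> \<open>B \<ge> 0\<close> by simp
      fix s assume s: "s \<in> S" "\<bar>s - t\<bar> < min r (e / (B + 1))"
      have "\<bar>f s - f t\<bar> \<le> B * \<bar>s - t\<bar>" using B s by simp
      also have "\<dots> \<le> (B + 1) * \<bar>s - t\<bar>" by (simp add: distrib_right)
      also have "\<dots> < (B + 1) * (e / (B + 1))"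
        using s \<open>B \<ge> 0\<close> by (intro mult_strict_left_mono) auto
      also have "\<dots> = e" using \<open>B \<ge> 0\<close> by simp
      finally show "\<bar>f s - f t\<bar> < e" .
    qed
  qed
qed

lemma lipschitz_at_const: "lipschitz_at (\<lambda>s. c) S t"
  by (rule lipschitz_atI[of 1 _ _ _ 0]) auto

lemma lipschitz_at_add:
  assumes "lipschitz_at f S t" "lipschitz_at g S t"
  shows "lipschitz_at (\<lambda>s. f s + g s) S t"
proof -
  obtain r1 B1 where "r1 > 0" and f: "\<And>s. s \<in> S \<Longrightarrow> \<bar>s - t\<bar> < r1 \<Longrightarrow> \<bar>f s - f t\<bar> \<le> B1 * \<bar>s - t\<bar>"
    using assms(1) by (rule lipschitz_atE) auto
  obtain r2 B2 where "r2 > 0" and g: "\<And>s. s \<in> S \<Longrightarrow> \<bar>s - t\<bar> < r2 \<Longrightarrow> \<bar>g s - g t\<bar> \<le> B2 * \<bar>s - t\<bar>"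
    using assms(2) by (rule lipschitz_atE) auto
  show ?thesis
  proof (rule lipschitz_atI[of "min r1 r2" _ _ _ "B1 + B2"])
    fix s assume "s \<in> S" "\<bar>s - t\<bar> < min r1 r2"
    then show "\<bar>(f s + g s) - (f t + g t)\<bar> \<le> (B1 + B2) * \<bar>s - t\<bar>"
      using f[of s] g[of s] by (simp add: distrib_right)
  qed (use \<open>r1 > 0\<close> \<open>r2 > 0\<close> in simp)
qed

lemma lipschitz_at_mult:
  assumes "lipschitz_at f S t" "lipschitz_at g S t"
  shows "lipschitz_at (\<lambda>s. f s * g s) S t"
proof -
  obtain r1 B1 where "r1 > 0" "B1 \<ge> 0" and f: "\<And>s. s \<in> S \<Longrightarrow> \<bar>s - t\<bar> < r1 \<Longrightarrow> \<bar>f s - f t\<bar> \<le> B1 * \<bar>s - t\<bar>"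
    using assms(1) by (rule lipschitz_atE) auto
  obtain r2 B2 where "r2 > 0" "B2 \<ge> 0" and g: "\<And>s. s \<in> S \<Longrightarrow> \<bar>s - t\<bar> < r2 \<Longrightarrow> \<bar>g s - g t\<bar> \<le> B2 * \<bar>s - t\<bar>"
    using assms(2) by (rule lipschitz_atE) auto
  show ?thesis
  proof (rule lipschitz_atI[of "min r1 r2" _ _ _ "(\<bar>f t\<bar> + B1 * r1) * B2 + \<bar>g t\<bar> * B1"])
    fix s assume s: "s \<in> S" "\<bar>s - t\<bar> < min r1 r2"
    have fs: "\<bar>f s - f t\<bar> \<le> B1 * \<bar>s - t\<bar>" and gs: "\<bar>g s - g t\<bar> \<le> B2 * \<bar>s - t\<bar>"
      using f g s by auto
    have "B1 * \<bar>s - t\<bar> \<le> B1 * r1" using s \<open>B1 \<ge> 0\<close> by (intro mult_left_mono) auto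
    then have "\<bar>f s\<bar> \<le> \<bar>f t\<bar> + B1 * r1" using fs by linarith
    have "\<bar>f s * g s - f t * g t\<bar> = \<bar>f s * (g s - g t) + g t * (f s - f t)\<bar>"
      by (simp add: algebra_simps)
    also have "\<dots> \<le> \<bar>f s\<bar> * \<bar>g s - g t\<bar> + \<bar>g t\<bar> * \<bar>f s - f t\<bar>"
      by (simp add: abs_mult[symmetric] abs_triangle_ineq)
    also have "\<dots> \<le> (\<bar>f t\<bar> + B1 * r1) * (B2 * \<bar>s - t\<bar>) + \<bar>g t\<bar> * (B1 * \<bar>s - t\<bar>)"
      using \<open>\<bar>f s\<bar> \<le> \<bar>f t\<bar> + B1 * r1\<close> fs gs by (intro add_mono mult_mono mult_left_mono) auto
    also have "\<dots> = ((\<bar>f t\<bar> + B1 * r1) * B2 + \<bar>g t\<bar> * B1) * \<bar>s - t\<bar>"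
      by (simp add: algebra_simps)
    finally show "\<bar>f s * g s - f t * g t\<bar> \<le> ((\<bar>f t\<bar> + B1 * r1) * B2 + \<bar>g t\<bar> * B1) * \<bar>s - t\<bar>" .
  qed (use \<open>r1 > 0\<close> \<open>r2 > 0\<close> in simp)
qed

lemma lipschitz_at_cmult: "lipschitz_at f S t \<Longrightarrow> lipschitz_at (\<lambda>s. c * f s) S t"
  using lipschitz_at_mult[OF lipschitz_at_const] by blast

lemma lipschitz_at_diff:
  "lipschitz_at f S t \<Longrightarrow> lipschitz_at g S t \<Longrightarrow> lipschitz_at (\<lambda>s. f s - g s) S t"
  using lipschitz_at_add[of f S t "\<lambda>s. (-1) * g s"] lipschitz_at_cmult[of g S t "-1"] by simp

lemma lipschitz_at_max_zero:
  assumes "lipschitz_at f S t"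
  shows "lipschitz_at (\<lambda>s. max 0 (f s)) S t"
proof -
  obtain r B where "r > 0" and f: "\<And>s. s \<in> S \<Longrightarrow> \<bar>s - t\<bar> < r \<Longrightarrow> \<bar>f s - f t\<bar> \<le> B * \<bar>s - t\<bar>"
    using assms by (rule lipschitz_atE) auto
  have "\<bar>max 0 (f s) - max 0 (f t)\<bar> \<le> \<bar>f s - f t\<bar>" for s
    by (simp add: max_def abs_if)
  with f \<open>r > 0\<close> show ?thesis by (intro lipschitz_atI[of r _ _ _ B]) (auto intro: order.trans)
qed

lemma has_real_derivative_imp_lipschitz_at:
  assumes "(f has_real_derivative D) (at t)"
  shows "lipschitz_at f S t"
proof -
  have "((\<lambda>y. (f y - f t) / (y - t)) \<longlongrightarrow> D) (at t)"
    using assms by (simp add: has_field_derivative_iff)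
  then have "\<forall>\<^sub>F y in at t. dist ((f y - f t) / (y - t)) D < 1"
    by (rule tendstoD) simp
  then obtain d where "d > 0"
    and d: "\<And>y. y \<noteq> t \<Longrightarrow> dist y t < d \<Longrightarrow> \<bar>(f y - f t) / (y - t) - D\<bar> < 1"
    unfolding eventually_at dist_real_def[of _ D] by blast
  show ?thesis
  proof (rule lipschitz_atI[OF \<open>d > 0\<close>, of _ _ _ "\<bar>D\<bar> + 1"])
    fix s assume "\<bar>s - t\<bar> < d"
    show "\<bar>f s - f t\<bar> \<le> (\<bar>D\<bar> + 1) * \<bar>s - t\<bar>"
    proof (cases "s = t")
      case False
      then have "\<bar>(f s - f t) / (s - t) - D\<bar> < 1"
        using d[of s] \<open>\<bar>s - t\<bar> < d\<close> by (simp add: dist_real_def)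
      then have "\<bar>(f s - f t) / (s - t)\<bar> \<le> \<bar>D\<bar> + 1" by linarith
      then show ?thesis using False by (simp add: abs_divide divide_le_eq)
    qed simp
  qed
qed

lemma locally_lipschitz_on_imp_lipschitz_at_component:
  assumes "locally_lipschitz_on I z" "t \<in> I" "S \<subseteq> I"
  shows "lipschitz_at (\<lambda>s. z s $ i) S t"
proof -
  obtain r L where "r > 0"
    and L: "\<forall>s1\<in>I \<inter> ball t r. \<forall>s2\<in>I \<inter> ball t r. dist (z s1) (z s2) \<le> L * dist s1 s2"
    using assms(1,2) unfolding locally_lipschitz_on_def by blast
  show ?thesis
  proof (rule lipschitz_atI[OF \<open>r > 0\<close>, of _ _ _ L])
    fix s assume "s \<in> S" "\<bar>s - t\<bar> < r"
    have "\<bar>z s $ i - z t $ i\<bar> \<le> norm (z s - z t)"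
      using component_le_norm_cart[of "z s - z t" i] by simp
    also have "\<dots> \<le> L * \<bar>s - t\<bar>"
      using L \<open>s \<in> S\<close> \<open>\<bar>s - t\<bar> < r\<close> \<open>r > 0\<close> assms(2,3)
      by (auto simp: dist_norm dist_real_def abs_minus_commute)
    finally show "\<bar>z s $ i - z t $ i\<bar> \<le> L * \<bar>s - t\<bar>" .
  qed
qed

lemma negligible_image_lipschitz_at:
  fixes \<phi> :: "real \<Rightarrow> real"
  assumes "\<And>t. t \<in> S \<Longrightarrow> lipschitz_at \<phi> S t" "negligible N" "N \<subseteq> S"
  shows "negligible (\<phi> ` N)"
proof (rule negligible_locally_Lipschitz_image[OF _ assms(2)])
  fix x assume "x \<in> N"
  then obtain r B where "r > 0"
    and B: "\<And>s. s \<in> S \<Longrightarrow> \<bar>s - x\<bar> < r \<Longrightarrow> \<bar>\<phi> s - \<phi> x\<bar> \<le> B * \<bar>s - x\<bar>"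
    using assms(1,3) by (meson lipschitz_atE subsetD)
  show "\<exists>T B. open T \<and> x \<in> T \<and> (\<forall>y\<in>N \<inter> T. norm (\<phi> y - \<phi> x) \<le> B * norm (y - x))"
    using B \<open>r > 0\<close> assms(3) by (intro exI[of _ "ball x r"] exI[of _ B]) (auto simp: dist_real_def)
qed auto

lemma last_crossing_deriv_nonneg:
  fixes \<phi> :: "real \<Rightarrow> real"
  assumes "a \<le> b" and cont: "continuous_on {a..b} \<phi>" and y: "\<phi> a < y" "y < \<phi> b"
  obtains s where "s \<in> {a<..<b}" "\<phi> s = y" "\<And>d. (\<phi> has_real_derivative d) (at s) \<Longrightarrow> d \<ge> 0"
proof -
  define S where "S = {t \<in> {a..b}. \<phi> t = y}"
  have "closed S"
    unfolding S_def by (rule continuous_closed_preimage_constant[OF cont]) auto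
  moreover have "S \<noteq> {}"
    using IVT'[of \<phi> a y b] y \<open>a \<le> b\<close> cont by (auto simp: S_def)
  moreover have bdd: "bdd_above S"
    unfolding S_def by (rule bdd_aboveI[of _ b]) auto
  ultimately have "Sup S \<in> S" by (rule closed_contains_Sup[rotated 2])
  then have s: "Sup S \<in> {a<..<b}" "\<phi> (Sup S) = y"
    using y by (auto simp: S_def less_le)
  moreover have "d \<ge> 0" if d: "(\<phi> has_real_derivative d) (at (Sup S))" for d
  proof (rule ccontr)
    assume "\<not> d \<ge> 0"
    then obtain \<delta> where "\<delta> > 0" and \<delta>: "\<And>h. h > 0 \<Longrightarrow> h < \<delta> \<Longrightarrow> \<phi> (Sup S + h) < y"
      using DERIV_neg_dec_right[OF d] s(2) by force
    define t where "t = Sup S + min (\<delta>/2) ((b - Sup S)/2)"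
    have t: "Sup S < t" "t \<le> b" "\<phi> t < y"
      using s(1) \<open>\<delta> > 0\<close> \<delta>[of "min (\<delta>/2) ((b - Sup S)/2)"] min.cobounded2[of "\<delta>/2" "(b - Sup S)/2"]
      by (auto simp: t_def)
    moreover have "continuous_on {t..b} \<phi>"
      using cont t s(1) by (auto intro: continuous_on_subset)
    ultimately obtain x where "t \<le> x" "x \<le> b" "\<phi> x = y"
      using IVT'[of \<phi> t y b] y by auto
    then have "x \<in> S" using t s(1) by (auto simp: S_def)
    then have "x \<le> Sup S" using bdd by (rule cSup_upper)
    with \<open>t \<le> x\<close> \<open>Sup S < t\<close> show False by simp
  qed
  ultimately show thesis using that by blast
qed

lemma nonincreasing_if_deriv_neg_off_null:
  fixes \<phi> :: "real \<Rightarrow> real"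
  assumes "a \<le> b" and lip: "\<And>t. t \<in> {a..b} \<Longrightarrow> lipschitz_at \<phi> {a..b} t"
    and "N \<in> null_sets lborel"
    and deriv: "\<And>t. t \<in> {a<..<b} \<Longrightarrow> t \<notin> N \<Longrightarrow> \<exists>d. (\<phi> has_real_derivative d) (at t) \<and> d < 0"
  shows "\<phi> b \<le> \<phi> a"
proof (rule ccontr)
  assume "\<not> \<phi> b \<le> \<phi> a"
  have "negligible (N \<inter> {a..b})"
    using \<open>N \<in> null_sets lborel\<close> negligible_iff_null_sets null_sets_completionI negligible_subset
    by (metis inf_le1)
  then have "negligible (\<phi> ` (N \<inter> {a..b}))"
    by (intro negligible_image_lipschitz_at[OF lip]) auto
  moreover have "\<not> negligible {\<phi> a<..<\<phi> b}"
    using negligible_interval(2)[of "\<phi> a" "\<phi> b"] \<open>\<not> \<phi> b \<le> \<phi> a\<close> by simp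
  ultimately have "\<not> {\<phi> a<..<\<phi> b} \<subseteq> \<phi> ` (N \<inter> {a..b})"
    using negligible_subset by blast
  then obtain y where y: "\<phi> a < y" "y < \<phi> b" "y \<notin> \<phi> ` (N \<inter> {a..b})"
    by (auto simp: subset_iff)
  have "continuous_on {a..b} \<phi>"
    using lip lipschitz_at_imp_continuous_within continuous_on_eq_continuous_within by blast
  then obtain s where s: "s \<in> {a<..<b}" "\<phi> s = y" "\<And>d. (\<phi> has_real_derivative d) (at s) \<Longrightarrow> d \<ge> 0"
    using last_crossing_deriv_nonneg[OF \<open>a \<le> b\<close> _ y(1,2)] by blast
  then have "s \<notin> N" using y(3) by auto
  with s deriv show False by (meson not_le)
qed

lemma nonincreasing_if_ae_deriv_nonpos:
  fixes \<phi> :: "real \<Rightarrow> real"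
  assumes "a \<le> b" and lip: "\<And>t. t \<in> {a..b} \<Longrightarrow> lipschitz_at \<phi> {a..b} t"
    and ae: "AE t in lborel. t \<in> {a<..<b} \<longrightarrow> (\<exists>d. (\<phi> has_real_derivative d) (at t) \<and> d \<le> 0)"
  shows "\<phi> b \<le> \<phi> a"
proof (cases "a = b")
  case False
  from ae obtain N
    where N: "{t \<in> space lborel. \<not> (t \<in> {a<..<b} \<longrightarrow> (\<exists>d. (\<phi> has_real_derivative d) (at t) \<and> d \<le> 0))} \<subseteq> N"
      and "N \<in> null_sets lborel"
    by (elim AE_E) (simp add: null_setsI)
  show ?thesis
  proof (rule field_le_epsilon)
    \<comment> \<open>tilting \<open>\<phi>\<close> by an arbitrarily small slope makes the derivative strictly negative\<close>
    fix e :: real assume "e > 0"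
    define c where "c = e / (b - a)"
    have "c > 0" using \<open>e > 0\<close> \<open>a \<le> b\<close> False by (simp add: c_def)
    have "\<phi> b - c * b \<le> \<phi> a - c * a"
    proof (rule nonincreasing_if_deriv_neg_off_null[OF \<open>a \<le> b\<close> _ \<open>N \<in> null_sets lborel\<close>])
      show "lipschitz_at (\<lambda>s. \<phi> s - c * s) {a..b} t" if "t \<in> {a..b}" for t
        using lip[OF that] by (intro lipschitz_at_diff lipschitz_at_cmult
            has_real_derivative_imp_lipschitz_at[OF DERIV_ident])
      fix t assume "t \<in> {a<..<b}" "t \<notin> N"
      then obtain d where "(\<phi> has_real_derivative d) (at t)" "d \<le> 0" using N by auto
      then have "((\<lambda>s. \<phi> s - c * s) has_real_derivative d - c) (at t)"
        using DERIV_diff[OF _ DERIV_cmult[OF DERIV_ident]] by fastforce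
      then show "\<exists>d. ((\<lambda>s. \<phi> s - c * s) has_real_derivative d) (at t) \<and> d < 0"
        using \<open>d \<le> 0\<close> \<open>c > 0\<close> by force
    qed
    moreover have "c * (b - a) = e" using \<open>a \<le> b\<close> False by (simp add: c_def)
    ultimately show "\<phi> b \<le> \<phi> a + e" by (simp add: algebra_simps)
  qed
qed simp

lemma filippov_solutionD:
  assumes "filippov_solution X D I z"
  shows "is_interval I" "locally_lipschitz_on I z" "t \<in> I \<Longrightarrow> z t \<in> D"
  using assms unfolding filippov_solution_def by blast+

lemma filippov_solution_atLeastAtMost_subset:
  assumes "filippov_solution X D I z" "a \<in> I" "b \<in> I"
  shows "{a..b} \<subseteq> I"
proof
  fix x assume "x \<in> {a..b}"
  then show "x \<in> I"
    using mem_is_interval_1_I[OF filippov_solutionD(1)[OF assms(1)] assms(2,3)] by simp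
qed

lemma lipschitz_at_solution_component:
  assumes "filippov_solution X D I z" "p \<in> I" "q \<in> I" "t \<in> {p..q}"
  shows "lipschitz_at (\<lambda>s. z s $ i) {p..q} t"
  using assms filippov_solution_atLeastAtMost_subset[OF assms(1-3)]
  by (intro locally_lipschitz_on_imp_lipschitz_at_component[OF filippov_solutionD(2)[OF assms(1)]]) auto

lemma filippov_solution_nonincreasing:
  fixes \<phi> :: "real \<Rightarrow> real"
  assumes sol: "filippov_solution X D I z" and "a \<in> I" "b \<in> I" "a \<le> b"
    and lip: "\<And>t. t \<in> {a..b} \<Longrightarrow> lipschitz_at \<phi> {a..b} t"
    and deriv: "\<And>t v. t \<in> {a<..<b} \<Longrightarrow> z t \<in> D \<Longrightarrow> (z has_vector_derivative v) (at t) \<Longrightarrow>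
        v \<in> filippov_set X D (z t) \<Longrightarrow> \<exists>d. (\<phi> has_real_derivative d) (at t) \<and> d \<le> 0"
  shows "\<phi> b \<le> \<phi> a"
proof (rule nonincreasing_if_ae_deriv_nonpos[OF \<open>a \<le> b\<close> lip])
  have ae: "AE t in lborel. t \<in> I \<longrightarrow>
        (\<exists>v. (z has_vector_derivative v) (at t within I) \<and> v \<in> filippov_set X D (z t))"
    using sol unfolding filippov_solution_def by blast
  have interior: "{a<..<b} \<subseteq> interior I"
    using filippov_solution_atLeastAtMost_subset[OF sol \<open>a \<in> I\<close> \<open>b \<in> I\<close>]
    by (intro interior_maximal) auto
  show "AE t in lborel. t \<in> {a<..<b} \<longrightarrow> (\<exists>d. (\<phi> has_real_derivative d) (at t) \<and> d \<le> 0)"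
    using ae
  proof eventually_elim
    case (elim t)
    show ?case
    proof
      assume t: "t \<in> {a<..<b}"
      then obtain v where v: "(z has_vector_derivative v) (at t within I)" "v \<in> filippov_set X D (z t)"
        using elim interior interior_subset by blast
      have "(z has_vector_derivative v) (at t)"
        using v(1) at_within_interior[of t I] t interior by auto
      then show "\<exists>d. (\<phi> has_real_derivative d) (at t) \<and> d \<le> 0"
        using deriv[OF t _ _ v(2)] filippov_solutionD(3)[OF sol] t interior interior_subset by blast
    qed
  qed
qed

lemma has_real_derivative_vec_nth:
  assumes "(z has_vector_derivative v) (at t)"
  shows "((\<lambda>s. z s $ i) has_real_derivative v $ i) (at t)"
proof -
  have "((\<lambda>s. z s $ i) has_derivative (\<lambda>x. (x *\<^sub>R v) $ i)) (at t)"
    using bounded_linear.has_derivative[OF bounded_linear_vec_nth] assms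
    unfolding has_vector_derivative_def by blast
  moreover have "(\<lambda>x. (x *\<^sub>R v) $ i) = (*) (v $ i)" by (auto simp: mult.commute)
  ultimately show ?thesis by (simp add: has_field_derivative_def)
qed

lemma has_real_derivative_max_zero_square:
  "((\<lambda>x::real. max 0 x * max 0 x) has_real_derivative 2 * max 0 x) (at x)"
proof (cases x "0::real" rule: linorder_cases)
  case less
  have "\<forall>\<^sub>F y in nhds x. max 0 y * max 0 y = 0"
    using eventually_nhds_in_open[of "{..<0}" x] less by (auto elim!: eventually_mono)
  then have "((\<lambda>x. max 0 x * max 0 x) has_real_derivative 0) (at x)
      \<longleftrightarrow> ((\<lambda>_. 0) has_real_derivative 0) (at x)"
    by (rule DERIV_cong_ev[OF refl _ refl])
  then show ?thesis using less by simp
next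
  case equal
  have "((\<lambda>y. (max 0 y * max 0 y - max 0 0 * max 0 0) / (y - 0)) \<longlongrightarrow> 0) (at (0::real))"
  proof (rule Lim_null_comparison)
    show "\<forall>\<^sub>F y in at 0. norm ((max 0 y * max 0 y - max 0 0 * max 0 0) / (y - 0)) \<le> \<bar>y\<bar>"
      by (rule always_eventually) (auto simp: max_def abs_mult)
    show "((\<lambda>y::real. \<bar>y\<bar>) \<longlongrightarrow> 0) (at 0)"
      using tendsto_rabs[OF tendsto_ident_at[of 0 UNIV]] by simp
  qed
  then show ?thesis using equal by (simp add: has_field_derivative_iff)
next
  case greater
  have "\<forall>\<^sub>F y in nhds x. max 0 y * max 0 y = y * y"
    using eventually_nhds_in_open[of "{0<..}" x] greater by (auto elim!: eventually_mono)
  then have "((\<lambda>x. max 0 x * max 0 x) has_real_derivative 2 * x) (at x)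
      \<longleftrightarrow> ((\<lambda>y. y * y) has_real_derivative 2 * x) (at x)"
    by (rule DERIV_cong_ev[OF refl _ refl])
  moreover have "((\<lambda>y. y * y) has_real_derivative 2 * x) (at x)"
    by (auto intro!: derivative_eq_intros)
  ultimately show ?thesis using greater by simp
qed

section \<open>The closed-loop model\<close>

lemma vec4_nth [simp]:
  "vec4 a b c d $ 1 = a" "vec4 a b c d $ 2 = b" "vec4 a b c d $ 3 = c" "vec4 a b c d $ 4 = d"
  by (simp_all add: vec4_def)

lemma norm_le_sum_components:
  fixes w :: "real^4"
  assumes "w \<in> Dprime"
  shows "norm w \<le> w$1 + w$2 + w$3 + w$4"
proof -
  have "norm w \<le> (\<Sum>i\<in>UNIV. \<bar>w$i\<bar>)" by (rule norm_le_l1_cart)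
  also have "\<dots> = w$1 + w$2 + w$3 + w$4" using assms by (simp add: sum_4 Dprime_def)
  finally show ?thesis .
qed

lemma cross_terms_le_sum_squares:
  fixes x1 x2 x3 p q r :: real
  assumes "p \<ge> 0" "q \<ge> 0" "r \<ge> 0"
  shows "2 * x1 * (p * x2 + q * x3) + 2 * x2 * x3 + 2 * x3 * (r * x1)
    \<le> (p + q + r + 1) * (x1 * x1 + x2 * x2 + x3 * x3)"
proof -
  have sq: "2 * x * y \<le> x * x + y * y" for x y :: real
    using sum_squares_ge_zero[of "x - y" 0] by (simp add: algebra_simps power2_eq_square)
  have "p * (2 * x1 * x2) \<le> p * (x1 * x1 + x2 * x2)" "q * (2 * x1 * x3) \<le> q * (x1 * x1 + x3 * x3)"
    "r * (2 * x3 * x1) \<le> r * (x3 * x3 + x1 * x1)"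
    using assms sq by (simp_all add: mult_left_mono)
  moreover have "p * (x3 * x3) \<ge> 0" "q * (x2 * x2) \<ge> 0" "r * (x2 * x2) \<ge> 0" "x1 * x1 \<ge> 0"
    using assms by simp_all
  ultimately show ?thesis using sq[of x2 x3] by (simp add: algebra_simps) (smt (verit) zero_le_square)
qed

lemma max_zero_mult_le: "(g > 0 \<Longrightarrow> d \<le> B) \<Longrightarrow> max 0 g * d \<le> max 0 g * (B::real)"
  by (cases "g > 0") auto

locale sterile_insect_model =
  fixes \<beta>E \<nu>E \<delta>E \<delta>M \<delta>F \<delta>s K \<nu> \<gamma>s lam :: real
  assumes pos: "\<beta>E > 0" "\<nu>E > 0" "\<delta>E > 0" "\<delta>M > 0" "\<delta>F > 0" "\<delta>s > 0" "K > 0"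
      "0 < \<nu>" "\<nu> < 1" "0 < \<gamma>s"
    and R0_gt_1: "\<beta>E * \<nu> * \<nu>E > \<delta>F * (\<nu>E + \<delta>E)"
    and lam_gt: "lam * (\<gamma>s * \<delta>F * (\<nu>E + \<delta>E)) > \<delta>s * (\<beta>E * \<nu> * \<nu>E - \<delta>F * (\<nu>E + \<delta>E))"
begin

definition "X = closed_loop \<beta>E \<nu>E \<delta>E \<delta>M \<delta>F \<delta>s K \<nu> \<gamma>s lam"
definition "a = \<nu>E + \<delta>E"
definition "c = (1 - \<nu>) * \<nu>E"
definition "\<kappa> = \<gamma>s * \<delta>F * a / (\<beta>E * \<nu> * \<nu>E - \<delta>F * a)"
definition "MM = Mset \<beta>E \<nu>E \<delta>E \<delta>M K \<nu> \<kappa>"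

definition g1 :: "real^4 \<Rightarrow> real" where "g1 w = \<beta>E * w$3 * (1 - w$1 / K) - a * w$1"
definition g2 :: "real^4 \<Rightarrow> real" where "g2 w = w$2 - \<kappa> * w$4"
definition g3 :: "real^4 \<Rightarrow> real" where "g3 w = c * w$1 - \<delta>M * w$2"

lemma mem_MM_iff: "w \<in> MM \<longleftrightarrow> w \<in> Dprime \<and> g1 w \<le> 0 \<and> g2 w \<le> 0 \<and> g3 w \<le> 0"
  by (auto simp: MM_def Mset_def T1_def T2_def T3_def g1_def g2_def g3_def a_def c_def)

lemma Dprime_nonneg:
  "w \<in> Dprime \<Longrightarrow> w$1 \<ge> 0 \<and> w$2 \<ge> 0 \<and> w$3 \<ge> 0 \<and> w$4 \<ge> 0"
  by (simp add: Dprime_def)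

lemma a_pos: "a > 0" and c_pos: "c > 0"
  using pos by (simp_all add: a_def c_def)

lemma kappa_pos: "\<kappa> > 0"
  using pos a_pos R0_gt_1 by (simp add: \<kappa>_def a_def)

lemma kappa_lam_gt: "\<kappa> * lam > \<delta>s"
proof -
  have "0 < \<beta>E * \<nu> * \<nu>E - \<delta>F * a" using R0_gt_1 by (simp add: a_def)
  moreover have "\<delta>s * (\<beta>E * \<nu> * \<nu>E - \<delta>F * a) < lam * (\<gamma>s * \<delta>F * a)"
    using lam_gt by (simp add: a_def)
  ultimately show ?thesis by (simp add: \<kappa>_def pos_less_divide_eq mult.commute)
qed

lemma lam_pos: "lam > 0"
  using kappa_lam_gt kappa_pos pos(6) by (metis zero_less_mult_pos less_trans)

lemma X_nth:
  "X w $ 1 = g1 w" "X w $ 2 = g3 w"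
  "X w $ 3 = \<nu> * \<nu>E * w$1 * (w$2 / (w$2 + \<gamma>s * w$4)) - \<delta>F * w$3"
  "X w $ 4 = lam * w$2 - \<delta>s * w$4"
  by (simp_all add: X_def closed_loop_def Let_def g1_def g3_def a_def c_def)

definition "\<rho> = \<kappa> / (\<kappa> + \<gamma>s)"
definition "\<theta> = \<gamma>s / (\<kappa> + \<gamma>s)"
definition "Cg = \<nu> * \<nu>E * \<theta> / c"

text \<open>\<open>\<Phi>\<close> bounds the female growth rate on all of \<open>Dprime\<close>. On \<open>MM\<close> the slack terms vanish,
  leaving the linear bound \<open>\<delta>F a E / \<beta>E - \<delta>F F\<close>; off \<open>MM\<close> they absorb the excess of
  \<open>M / (M + \<gamma>s Ms)\<close> over its value \<open>\<rho>\<close> on the boundary \<open>M = \<kappa> Ms\<close>.\<close>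
definition \<Phi> :: "real^4 \<Rightarrow> real" where
  "\<Phi> w = \<delta>F * a / \<beta>E * w$1 + Cg * (\<delta>M * max 0 (g2 w) + max 0 (g3 w)) - \<delta>F * w$3"

lemma rho_nonneg: "\<rho> \<ge> 0" and theta_nonneg: "\<theta> \<ge> 0" and Cg_pos: "Cg > 0"
  using pos kappa_pos c_pos by (simp_all add: \<rho>_def \<theta>_def Cg_def)

lemma nu_rho_eq: "\<nu> * \<nu>E * \<rho> = \<delta>F * a / \<beta>E"
proof -
  have "\<beta>E * \<nu> * \<nu>E - \<delta>F * a > 0" using R0_gt_1 by (simp add: a_def)
  then show ?thesis using pos a_pos by (simp add: \<rho>_def \<kappa>_def field_simps)
qed

lemma male_fraction_eq:
  assumes "w$2 + \<gamma>s * w$4 \<noteq> 0"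
  shows "w$2 / (w$2 + \<gamma>s * w$4) = \<rho> + \<theta> * (g2 w / (w$2 + \<gamma>s * w$4))"
proof -
  define S where "S = w$2 + \<gamma>s * w$4"
  define k where "k = \<kappa> + \<gamma>s"
  have "S \<noteq> 0" "k \<noteq> 0" using assms kappa_pos pos by (simp_all add: S_def k_def)
  then have "\<kappa> / k + \<gamma>s / k * (g2 w / S) = (\<kappa> * S + \<gamma>s * g2 w) / (k * S)"
    by (simp add: field_simps)
  also have "\<kappa> * S + \<gamma>s * g2 w = k * w$2"
    by (simp add: S_def k_def g2_def algebra_simps)
  finally show ?thesis using \<open>k \<noteq> 0\<close> by (simp add: S_def k_def \<rho>_def \<theta>_def)
qed

lemma eggs_times_g2_le:
  assumes "w \<in> Dprime"
  shows "c * (w$1 * g2 w) \<le> (w$2 + \<gamma>s * w$4) * (\<delta>M * max 0 (g2 w) + max 0 (g3 w))"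
proof -
  define S where "S = w$2 + \<gamma>s * w$4"
  have "w$1 \<ge> 0" "w$2 \<ge> 0" "\<kappa> * w$4 \<ge> 0" "\<gamma>s * w$4 \<ge> 0"
    using Dprime_nonneg[OF assms] kappa_pos pos by simp_all
  then have nonneg: "w$1 \<ge> 0" "w$2 \<le> S" "S \<ge> 0" "g2 w \<le> S"
    by (simp_all add: S_def g2_def)
  show ?thesis
  proof (cases "g2 w \<le> 0")
    case True
    have "c * (w$1 * g2 w) \<le> 0"
      using True nonneg c_pos by (simp add: mult_nonneg_nonpos)
    also have "0 \<le> S * (\<delta>M * max 0 (g2 w) + max 0 (g3 w))"
      using nonneg pos by simp
    finally show ?thesis by (simp add: S_def)
  next
    case False
    have "c * (w$1 * g2 w) = (c * w$1) * g2 w" by simp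
    also have "\<dots> \<le> (\<delta>M * w$2 + max 0 (g3 w)) * g2 w"
      using False by (intro mult_right_mono) (auto simp: g3_def)
    also have "\<dots> = \<delta>M * (w$2 * g2 w) + max 0 (g3 w) * g2 w"
      by (simp add: algebra_simps)
    also have "\<dots> \<le> \<delta>M * (S * g2 w) + max 0 (g3 w) * S"
      using False nonneg pos by (intro add_mono mult_left_mono mult_right_mono) auto
    also have "\<dots> = S * (\<delta>M * max 0 (g2 w) + max 0 (g3 w))"
      using False by (simp add: algebra_simps)
    finally show ?thesis by (simp add: S_def)
  qed
qed

lemma female_recruitment_le:
  assumes "w \<in> Dprime"
  shows "w$1 * (w$2 / (w$2 + \<gamma>s * w$4)) \<le> \<rho> * w$1 + \<theta> / c * (\<delta>M * max 0 (g2 w) + max 0 (g3 w))"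
proof (cases "w$2 + \<gamma>s * w$4 = 0")
  case True
  then show ?thesis
    using Dprime_nonneg[OF assms] rho_nonneg theta_nonneg c_pos pos by simp
next
  case False
  define S where "S = w$2 + \<gamma>s * w$4"
  define P where "P = \<delta>M * max 0 (g2 w) + max 0 (g3 w)"
  have "w$2 \<ge> 0" "\<gamma>s * w$4 \<ge> 0" using Dprime_nonneg[OF assms] pos by simp_all
  then have "S > 0" using False unfolding S_def by linarith
  have "w$1 * (w$2 / S) = \<rho> * w$1 + \<theta> * (w$1 * g2 w / S)"
    using male_fraction_eq[OF False] by (simp add: S_def algebra_simps)
  also have "\<dots> \<le> \<rho> * w$1 + \<theta> * (P / c)"
  proof -
    have "c * (w$1 * g2 w) \<le> S * P"
      using eggs_times_g2_le[OF assms] by (simp add: S_def P_def)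
    then have "w$1 * g2 w / S \<le> P / c"
      using \<open>S > 0\<close> c_pos by (simp add: divide_simps mult.commute)
    then show ?thesis using theta_nonneg by (intro add_left_mono mult_left_mono)
  qed
  finally show ?thesis by (simp add: S_def P_def)
qed

lemma X_nth_3_le:
  assumes "w \<in> Dprime"
  shows "X w $ 3 \<le> \<Phi> w"
proof -
  have "X w $ 3 = \<nu> * \<nu>E * (w$1 * (w$2 / (w$2 + \<gamma>s * w$4))) - \<delta>F * w$3"
    by (simp add: X_nth)
  also have "\<dots> \<le> \<nu> * \<nu>E * (\<rho> * w$1 + \<theta> / c * (\<delta>M * max 0 (g2 w) + max 0 (g3 w))) - \<delta>F * w$3"
    using female_recruitment_le[OF assms] pos by (intro diff_right_mono mult_left_mono) auto
  also have "\<dots> = \<Phi> w"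
    using nu_rho_eq by (simp add: \<Phi>_def Cg_def algebra_simps)
  finally show ?thesis .
qed

lemma continuous_at_g:
  "continuous (at w) g1" "continuous (at w) g2" "continuous (at w) g3" "continuous (at w) \<Phi>"
  using pos unfolding g1_def g2_def g3_def \<Phi>_def by (auto intro!: continuous_intros)

text \<open>Only the female equation is discontinuous (where \<open>M + \<gamma>s Ms = 0\<close>), so the other three
  components of a Filippov velocity are exact, and for the female one the continuous majorant
  \<open>\<Phi>\<close> survives the convexification.\<close>
lemma filippov_set_closed_loop:
  assumes "v \<in> filippov_set X Dprime w"
  shows "v$1 = g1 w" "v$2 = g3 w" "v$4 = lam * w$2 - \<delta>s * w$4" "v$3 \<le> \<Phi> w"
proof -
  show "v$1 = g1 w" "v$2 = g3 w"
    by (rule filippov_set_component_eq[OF assms continuous_at_g(1)], simp add: X_nth)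
      (rule filippov_set_component_eq[OF assms continuous_at_g(3)], simp add: X_nth)
  show "v$4 = lam * w$2 - \<delta>s * w$4"
    by (rule filippov_set_component_eq[OF assms]) (auto intro!: continuous_intros simp: X_nth)
  show "v$3 \<le> \<Phi> w"
    by (rule filippov_set_component_le[OF assms continuous_at_g(4) X_nth_3_le])
qed

definition Dg1 :: "real^4 \<Rightarrow> real^4 \<Rightarrow> real" where "Dg1 w v = \<beta>E * v$3 * (1 - w$1 / K) - \<beta>E * w$3 * v$1 / K - a * v$1"
definition Dg2 :: "real^4 \<Rightarrow> real^4 \<Rightarrow> real" where "Dg2 w v = v$2 - \<kappa> * v$4"
definition Dg3 :: "real^4 \<Rightarrow> real^4 \<Rightarrow> real" where "Dg3 w v = c * v$1 - \<delta>M * v$2"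

lemma has_real_derivative_g:
  assumes "(z has_vector_derivative v) (at t)"
  shows "((\<lambda>s. g1 (z s)) has_real_derivative Dg1 (z t) v) (at t)"
    and "((\<lambda>s. g2 (z s)) has_real_derivative Dg2 (z t) v) (at t)"
    and "((\<lambda>s. g3 (z s)) has_real_derivative Dg3 (z t) v) (at t)"
  using pos(7) unfolding g1_def g2_def g3_def Dg1_def Dg2_def Dg3_def
  by (auto intro!: derivative_eq_intros has_real_derivative_vec_nth[OF assms]
      simp: field_simps)

lemma Dg1_le:
  assumes "w \<in> Dprime" "g1 w > 0" "v$1 = g1 w" "v$3 \<le> \<Phi> w"
  shows "Dg1 w v \<le> \<beta>E * Cg * (\<delta>M * max 0 (g2 w) + max 0 (g3 w))"
proof -
  define q where "q = 1 - w$1 / K"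
  define P where "P = \<delta>M * max 0 (g2 w) + max 0 (g3 w)"
  have nonneg: "w$1 \<ge> 0" "w$3 \<ge> 0" "P \<ge> 0" using Dprime_nonneg[OF assms(1)] pos by (auto simp: P_def)
  have "q > 0"
  proof (rule ccontr)
    assume "\<not> q > 0"
    then have "\<beta>E * w$3 * q \<le> 0" using nonneg pos by (simp add: mult_nonneg_nonpos)
    moreover have "a * w$1 \<ge> 0" using nonneg a_pos by simp
    ultimately show False using assms(2) by (simp add: g1_def q_def)
  qed
  have "q \<le> 1" using nonneg pos by (simp add: q_def)
  have "Dg1 w v = \<beta>E * q * v$3 - (\<beta>E * w$3 / K + a) * g1 w"
    using assms(3) by (simp add: Dg1_def q_def algebra_simps)
  also have "\<dots> \<le> \<beta>E * q * \<Phi> w"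
  proof -
    have "\<beta>E * q * v$3 \<le> \<beta>E * q * \<Phi> w" using assms(4) \<open>q > 0\<close> pos by simp
    moreover have "(\<beta>E * w$3 / K + a) * g1 w \<ge> 0" using assms(2) a_pos pos nonneg by simp
    ultimately show ?thesis by linarith
  qed
  also have "\<beta>E * q * \<Phi> w = q * (\<delta>F * (a * w$1 - \<beta>E * w$3)) + q * (\<beta>E * Cg * P)"
    using pos by (simp add: \<Phi>_def P_def field_simps)
  also have "\<dots> \<le> 0 + 1 * (\<beta>E * Cg * P)"
  proof (intro add_mono)
    have "\<beta>E * w$3 * q \<le> \<beta>E * w$3" using \<open>q \<le> 1\<close> pos nonneg by (simp add: mult_left_le)
    then have "a * w$1 - \<beta>E * w$3 \<le> 0" using assms(2) by (simp add: g1_def q_def)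
    then show "q * (\<delta>F * (a * w$1 - \<beta>E * w$3)) \<le> 0"
      using \<open>q > 0\<close> pos by (simp add: mult_nonneg_nonpos)
    show "q * (\<beta>E * Cg * P) \<le> 1 * (\<beta>E * Cg * P)"
      using \<open>q \<le> 1\<close> pos Cg_pos nonneg by (intro mult_right_mono) auto
  qed
  finally show ?thesis by (simp add: P_def)
qed

lemma Dg2_le:
  assumes "w \<in> Dprime" "g2 w > 0" "v$2 = g3 w" "v$4 = lam * w$2 - \<delta>s * w$4"
  shows "Dg2 w v \<le> max 0 (g3 w)"
proof -
  have "\<delta>s * (\<kappa> * w$4) \<le> \<delta>s * w$2" using assms(2) pos by (simp add: g2_def)
  moreover have "\<delta>s * w$2 \<le> \<kappa> * lam * w$2"
    using kappa_lam_gt Dprime_nonneg[OF assms(1)] by (intro mult_right_mono) auto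
  moreover have "Dg2 w v = g3 w - \<kappa> * lam * w$2 + \<delta>s * (\<kappa> * w$4)"
    by (simp add: Dg2_def assms(3,4) algebra_simps)
  ultimately show ?thesis by linarith
qed

lemma Dg3_le:
  assumes "v$1 = g1 w" "v$2 = g3 w" "g3 w > 0"
  shows "Dg3 w v \<le> c * max 0 (g1 w)"
proof -
  have "c * g1 w \<le> c * max 0 (g1 w)" using c_pos by (intro mult_left_mono) auto
  moreover have "\<delta>M * g3 w > 0" using assms(3) pos by simp
  ultimately show ?thesis unfolding Dg3_def assms(1,2) by linarith
qed

section \<open>Invariance of \<open>MM\<close>\<close>

definition V :: "real^4 \<Rightarrow> real" where
  "V w = max 0 (g1 w) * max 0 (g1 w) + max 0 (g2 w) * max 0 (g2 w) + max 0 (g3 w) * max 0 (g3 w)"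

definition "L = \<beta>E * Cg * \<delta>M + \<beta>E * Cg + c + 1"

lemma V_le_0_iff: "w \<in> Dprime \<Longrightarrow> V w \<le> 0 \<longleftrightarrow> w \<in> MM"
proof -
  have "max 0 x * max 0 x \<ge> 0" "max 0 x * max 0 x = 0 \<longleftrightarrow> x \<le> (0::real)" for x
    by (auto simp: max_def)
  then show "w \<in> Dprime \<Longrightarrow> V w \<le> 0 \<longleftrightarrow> w \<in> MM"
    unfolding V_def mem_MM_iff by (smt (verit))
qed

lemma has_real_derivative_V:
  assumes "(z has_vector_derivative v) (at t)"
  shows "((\<lambda>s. V (z s)) has_real_derivative 2 * max 0 (g1 (z t)) * Dg1 (z t) v
    + 2 * max 0 (g2 (z t)) * Dg2 (z t) v + 2 * max 0 (g3 (z t)) * Dg3 (z t) v) (at t)"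
  unfolding V_def
  by (intro DERIV_add DERIV_chain2[OF has_real_derivative_max_zero_square] has_real_derivative_g[OF assms])

lemma V_derivative_le:
  assumes "w \<in> Dprime" "v \<in> filippov_set X Dprime w"
  shows "2 * max 0 (g1 w) * Dg1 w v + 2 * max 0 (g2 w) * Dg2 w v + 2 * max 0 (g3 w) * Dg3 w v
    \<le> L * V w"
proof -
  note v = filippov_set_closed_loop[OF assms(2)]
  define x1 x2 x3 where "x1 = max 0 (g1 w)" and "x2 = max 0 (g2 w)" and "x3 = max 0 (g3 w)"
  have "x1 * Dg1 w v \<le> x1 * (\<beta>E * Cg * \<delta>M * x2 + \<beta>E * Cg * x3)"
    using Dg1_le[OF assms(1) _ v(1,4)] unfolding x1_def x2_def x3_def
    by (intro max_zero_mult_le) (simp add: algebra_simps)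
  moreover have "x2 * Dg2 w v \<le> x2 * x3"
    using Dg2_le[OF assms(1) _ v(2,3)] unfolding x2_def x3_def by (rule max_zero_mult_le)
  moreover have "x3 * Dg3 w v \<le> x3 * (c * x1)"
    using Dg3_le[OF v(1,2)] unfolding x1_def x3_def by (rule max_zero_mult_le)
  moreover have "2 * x1 * (\<beta>E * Cg * \<delta>M * x2 + \<beta>E * Cg * x3) + 2 * x2 * x3 + 2 * x3 * (c * x1)
      \<le> L * V w"
    using cross_terms_le_sum_squares[of "\<beta>E * Cg * \<delta>M" "\<beta>E * Cg" c x1 x2 x3] pos Cg_pos c_pos
    by (simp add: L_def V_def x1_def x2_def x3_def)
  ultimately show ?thesis
    unfolding x1_def[symmetric] x2_def[symmetric] x3_def[symmetric] by linarith
qed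

lemma lipschitz_at_V_comp:
  assumes "locally_lipschitz_on I z" "t \<in> I" "S \<subseteq> I"
  shows "lipschitz_at (\<lambda>s. V (z s)) S t"
  unfolding V_def g1_def g2_def g3_def
  by (intro lipschitz_at_mult lipschitz_at_add lipschitz_at_diff lipschitz_at_max_zero
      lipschitz_at_const lipschitz_at_cmult[where c = "1 / K", simplified]
      locally_lipschitz_on_imp_lipschitz_at_component[OF assms])

theorem MM_invariant:
  assumes sol: "filippov_solution X Dprime I z" and "0 \<in> I" "z 0 \<in> MM" "T \<in> I" "T \<ge> 0"
  shows "z T \<in> MM"
proof -
  note sub = filippov_solution_atLeastAtMost_subset[OF sol \<open>0 \<in> I\<close> \<open>T \<in> I\<close>]
  have "exp (- L * T) * V (z T) \<le> exp (- L * 0) * V (z 0)"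
  proof (rule filippov_solution_nonincreasing[OF sol \<open>0 \<in> I\<close> \<open>T \<in> I\<close> \<open>T \<ge> 0\<close>])
    fix t assume "t \<in> {0..T}"
    show "lipschitz_at (\<lambda>s. exp (- L * s) * V (z s)) {0..T} t"
      using \<open>t \<in> {0..T}\<close> sub
      by (intro lipschitz_at_mult lipschitz_at_V_comp[OF filippov_solutionD(2)[OF sol]]
          has_real_derivative_imp_lipschitz_at[of _ "exp (- L * t) * (- L)"])
        (auto intro!: derivative_eq_intros)
  next
    fix t v assume "z t \<in> Dprime" "(z has_vector_derivative v) (at t)"
      "v \<in> filippov_set X Dprime (z t)"
    define V' where "V' = 2 * max 0 (g1 (z t)) * Dg1 (z t) v
      + 2 * max 0 (g2 (z t)) * Dg2 (z t) v + 2 * max 0 (g3 (z t)) * Dg3 (z t) v"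
    have "((\<lambda>s. exp (- L * s)) has_real_derivative exp (- L * t) * (- L)) (at t)"
      by (auto intro!: derivative_eq_intros)
    from DERIV_mult[OF this has_real_derivative_V[OF \<open>(z has_vector_derivative v) (at t)\<close>]]
    have "((\<lambda>s. exp (- L * s) * V (z s)) has_real_derivative
        exp (- L * t) * (- L) * V (z t) + V' * exp (- L * t)) (at t)"
      unfolding V'_def .
    moreover have "V' - L * V (z t) \<le> 0"
      using V_derivative_le[OF \<open>z t \<in> Dprime\<close> \<open>v \<in> filippov_set X Dprime (z t)\<close>]
      unfolding V'_def by linarith
    then have "exp (- L * t) * (V' - L * V (z t)) \<le> 0"
      by (simp add: mult_nonneg_nonpos)
    moreover have "exp (- L * t) * (- L) * V (z t) + V' * exp (- L * t)
        = exp (- L * t) * (V' - L * V (z t))"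
      by (simp add: algebra_simps)
    ultimately show "\<exists>d. ((\<lambda>s. exp (- L * s) * V (z s)) has_real_derivative d) (at t) \<and> d \<le> 0"
      by auto
  qed
  moreover have "V (z 0) \<le> 0"
    using V_le_0_iff filippov_solutionD(3)[OF sol \<open>0 \<in> I\<close>] \<open>z 0 \<in> MM\<close> by blast
  ultimately have "exp (- L * T) * V (z T) \<le> 0" by simp
  then have "V (z T) \<le> 0" by (simp add: mult_le_0_iff)
  then show ?thesis using V_le_0_iff filippov_solutionD(3)[OF sol \<open>T \<in> I\<close>] by blast
qed

section \<open>Convergence and stability in \<open>MM\<close>\<close>

lemma nonincreasing_along_MM:
  fixes \<phi> :: "real \<Rightarrow> real"
  assumes sol: "filippov_solution X Dprime I z" and "0 \<in> I" "z 0 \<in> MM"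
    and "p \<in> I" "q \<in> I" "0 \<le> p" "p \<le> q"
    and lip: "\<And>t. t \<in> {p..q} \<Longrightarrow> lipschitz_at \<phi> {p..q} t"
    and deriv: "\<And>t v. t \<in> {p<..<q} \<Longrightarrow> z t \<in> MM \<Longrightarrow> (z has_vector_derivative v) (at t) \<Longrightarrow>
        v$1 = g1 (z t) \<Longrightarrow> v$2 = g3 (z t) \<Longrightarrow> v$4 = lam * z t $ 2 - \<delta>s * z t $ 4 \<Longrightarrow>
        v$3 \<le> \<Phi> (z t) \<Longrightarrow> \<exists>d. (\<phi> has_real_derivative d) (at t) \<and> d \<le> 0"
  shows "\<phi> q \<le> \<phi> p"
proof (rule filippov_solution_nonincreasing[OF sol \<open>p \<in> I\<close> \<open>q \<in> I\<close> \<open>p \<le> q\<close> lip])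
  fix t v assume t: "t \<in> {p<..<q}" and "(z has_vector_derivative v) (at t)"
    and v: "v \<in> filippov_set X Dprime (z t)"
  have "t \<in> I" using filippov_solution_atLeastAtMost_subset[OF sol \<open>p \<in> I\<close> \<open>q \<in> I\<close>] t by auto
  then have "z t \<in> MM" using MM_invariant[OF sol \<open>0 \<in> I\<close> \<open>z 0 \<in> MM\<close>] t \<open>0 \<le> p\<close> by simp
  then show "\<exists>d. (\<phi> has_real_derivative d) (at t) \<and> d \<le> 0"
    using deriv[OF t _ \<open>(z has_vector_derivative v) (at t)\<close> filippov_set_closed_loop[OF v]] by blast
qed

lemma eggs_antimono:
  assumes sol: "filippov_solution X Dprime I z" and "0 \<in> I" "z 0 \<in> MM"
    and "p \<in> I" "q \<in> I" "0 \<le> p" "p \<le> q"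
  shows "z q $ 1 \<le> z p $ 1"
proof (rule nonincreasing_along_MM[OF assms])
  show "lipschitz_at (\<lambda>s. z s $ 1) {p..q} t" if "t \<in> {p..q}" for t
    using lipschitz_at_solution_component[OF sol \<open>p \<in> I\<close> \<open>q \<in> I\<close> that] .
  fix t v assume "z t \<in> MM" "(z has_vector_derivative v) (at t)" "v$1 = g1 (z t)"
  then show "\<exists>d. ((\<lambda>s. z s $ 1) has_real_derivative d) (at t) \<and> d \<le> 0"
    using has_real_derivative_vec_nth[of z v t 1] by (auto simp: mem_MM_iff)
qed

lemma males_antimono:
  assumes sol: "filippov_solution X Dprime I z" and "0 \<in> I" "z 0 \<in> MM"
    and "p \<in> I" "q \<in> I" "0 \<le> p" "p \<le> q"
  shows "z q $ 2 \<le> z p $ 2"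
proof (rule nonincreasing_along_MM[OF assms])
  show "lipschitz_at (\<lambda>s. z s $ 2) {p..q} t" if "t \<in> {p..q}" for t
    using lipschitz_at_solution_component[OF sol \<open>p \<in> I\<close> \<open>q \<in> I\<close> that] .
  fix t v assume "z t \<in> MM" "(z has_vector_derivative v) (at t)" "v$2 = g3 (z t)"
  then show "\<exists>d. ((\<lambda>s. z s $ 2) has_real_derivative d) (at t) \<and> d \<le> 0"
    using has_real_derivative_vec_nth[of z v t 2] by (auto simp: mem_MM_iff)
qed

lemma weighted_sum_derivative_le:
  fixes v :: "real^4"
  assumes "w \<in> MM" "v$1 = g1 w" "v$3 \<le> \<Phi> w"
  shows "v$1 + \<beta>E / \<delta>F * v$3 \<le> - (\<beta>E / K) * w$1 * w$3"
proof -
  have "\<beta>E / \<delta>F * v$3 \<le> \<beta>E / \<delta>F * \<Phi> w" using assms(3) pos by (intro mult_left_mono) auto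
  also have "\<dots> = a * w$1 - \<beta>E * w$3"
    using assms(1) pos by (simp add: mem_MM_iff \<Phi>_def field_simps)
  finally have "\<beta>E / \<delta>F * v$3 \<le> a * w$1 - \<beta>E * w$3" .
  moreover have "v$1 = \<beta>E * w$3 - (\<beta>E / K) * w$1 * w$3 - a * w$1"
    using assms(2) pos(7) by (simp add: g1_def field_simps)
  ultimately show ?thesis by linarith
qed

lemma weighted_sum_antimono:
  assumes sol: "filippov_solution X Dprime I z" and "0 \<in> I" "z 0 \<in> MM"
    and "p \<in> I" "q \<in> I" "0 \<le> p" "p \<le> q"
  shows "z q $ 1 + \<beta>E / \<delta>F * z q $ 3 \<le> z p $ 1 + \<beta>E / \<delta>F * z p $ 3"
proof (rule nonincreasing_along_MM[OF assms])
  show "lipschitz_at (\<lambda>s. z s $ 1 + \<beta>E / \<delta>F * z s $ 3) {p..q} t" if "t \<in> {p..q}" for t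
    by (intro lipschitz_at_add lipschitz_at_cmult lipschitz_at_solution_component[OF sol \<open>p \<in> I\<close> \<open>q \<in> I\<close> that])
  fix t v assume "z t \<in> MM" and d: "(z has_vector_derivative v) (at t)"
    and v: "v$1 = g1 (z t)" "v$3 \<le> \<Phi> (z t)"
  have "((\<lambda>s. z s $ 1 + \<beta>E / \<delta>F * z s $ 3) has_real_derivative v$1 + \<beta>E / \<delta>F * v$3) (at t)"
    by (intro DERIV_add DERIV_cmult has_real_derivative_vec_nth d)
  moreover have "(\<beta>E / K) * z t $ 1 * z t $ 3 \<ge> 0"
    using \<open>z t \<in> MM\<close> pos by (simp add: mem_MM_iff Dprime_def)
  ultimately show "\<exists>d. ((\<lambda>s. z s $ 1 + \<beta>E / \<delta>F * z s $ 3) has_real_derivative d) (at t) \<and> d \<le> 0"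
    using weighted_sum_derivative_le[OF \<open>z t \<in> MM\<close> v] by force
qed

lemma eggs_dissipation_antimono:
  assumes sol: "filippov_solution X Dprime I z" and "0 \<in> I" "z 0 \<in> MM"
    and "p \<in> I" "q \<in> I" "0 \<le> p" "p \<le> q" and "e > 0" "z q $ 1 \<ge> e"
  shows "z q $ 1 + K / e * (z q $ 1 + \<beta>E / \<delta>F * z q $ 3) + a * e * q
       \<le> z p $ 1 + K / e * (z p $ 1 + \<beta>E / \<delta>F * z p $ 3) + a * e * p"
proof (rule nonincreasing_along_MM[OF assms(1-7)])
  show "lipschitz_at (\<lambda>s. z s $ 1 + K / e * (z s $ 1 + \<beta>E / \<delta>F * z s $ 3) + a * e * s) {p..q} t"
    if "t \<in> {p..q}" for t
    by (intro lipschitz_at_add lipschitz_at_cmult has_real_derivative_imp_lipschitz_at[OF DERIV_ident]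
        lipschitz_at_solution_component[OF sol \<open>p \<in> I\<close> \<open>q \<in> I\<close> that])
  fix t v assume t: "t \<in> {p<..<q}" and "z t \<in> MM" and d: "(z has_vector_derivative v) (at t)"
    and v: "v$1 = g1 (z t)" "v$3 \<le> \<Phi> (z t)"
  have "((\<lambda>s. z s $ 1 + K / e * (z s $ 1 + \<beta>E / \<delta>F * z s $ 3) + a * e * s) has_real_derivative
      v$1 + K / e * (v$1 + \<beta>E / \<delta>F * v$3) + a * e * 1) (at t)"
    by (intro DERIV_add DERIV_cmult has_real_derivative_vec_nth d DERIV_ident)
  moreover have "v$1 + K / e * (v$1 + \<beta>E / \<delta>F * v$3) + a * e * 1 \<le> 0"
  proof -
    have "t \<in> I" using filippov_solution_atLeastAtMost_subset[OF sol \<open>p \<in> I\<close> \<open>q \<in> I\<close>] t by auto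
    then have "z t $ 1 \<ge> e"
      using eggs_antimono[OF sol \<open>0 \<in> I\<close> \<open>z 0 \<in> MM\<close> _ \<open>q \<in> I\<close>] t \<open>0 \<le> p\<close> \<open>z q $ 1 \<ge> e\<close>
      by force
    have nonneg: "z t $ 1 \<ge> 0" "z t $ 3 \<ge> 0" using \<open>z t \<in> MM\<close> by (auto simp: mem_MM_iff Dprime_def)
    have "K / e * (v$1 + \<beta>E / \<delta>F * v$3) \<le> K / e * (- (\<beta>E / K) * z t $ 1 * z t $ 3)"
      using weighted_sum_derivative_le[OF \<open>z t \<in> MM\<close> v] \<open>e > 0\<close> pos by (intro mult_left_mono) auto
    also have "\<dots> = - \<beta>E * z t $ 3 * (z t $ 1 / e)" using pos(7) \<open>e > 0\<close> by (simp add: field_simps)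
    also have "\<dots> \<le> - \<beta>E * z t $ 3"
      using \<open>z t $ 1 \<ge> e\<close> \<open>e > 0\<close> pos nonneg mult_left_mono[of 1 "z t $ 1 / e" "\<beta>E * z t $ 3"]
      by simp
    finally have "K / e * (v$1 + \<beta>E / \<delta>F * v$3) \<le> - \<beta>E * z t $ 3" .
    moreover have "v$1 = \<beta>E * z t $ 3 - (\<beta>E / K) * z t $ 1 * z t $ 3 - a * z t $ 1"
      using v(1) pos(7) by (simp add: g1_def field_simps)
    moreover have "(\<beta>E / K) * z t $ 1 * z t $ 3 \<ge> 0" "a * e \<le> a * z t $ 1"
      using pos nonneg \<open>z t $ 1 \<ge> e\<close> a_pos by simp_all
    ultimately show ?thesis by linarith
  qed
  ultimately show "\<exists>d. ((\<lambda>s. z s $ 1 + K / e * (z s $ 1 + \<beta>E / \<delta>F * z s $ 3) + a * e * s)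
      has_real_derivative d) (at t) \<and> d \<le> 0"
    by blast
qed

lemma males_dissipation_antimono:
  assumes sol: "filippov_solution X Dprime I z" and "0 \<in> I" "z 0 \<in> MM"
    and "p \<in> I" "q \<in> I" "0 \<le> p" "p \<le> q" and "m > 0" "z q $ 2 \<ge> m"
    and "c * z p $ 1 \<le> \<delta>M * m / 2"
  shows "z q $ 2 + \<delta>M * m / 2 * q \<le> z p $ 2 + \<delta>M * m / 2 * p"
proof (rule nonincreasing_along_MM[OF assms(1-7)])
  show "lipschitz_at (\<lambda>s. z s $ 2 + \<delta>M * m / 2 * s) {p..q} t" if "t \<in> {p..q}" for t
    by (intro lipschitz_at_add lipschitz_at_cmult has_real_derivative_imp_lipschitz_at[OF DERIV_ident]
        lipschitz_at_solution_component[OF sol \<open>p \<in> I\<close> \<open>q \<in> I\<close> that])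
  fix t v assume t: "t \<in> {p<..<q}" and d: "(z has_vector_derivative v) (at t)"
    and v: "v$2 = g3 (z t)"
  have "((\<lambda>s. z s $ 2 + \<delta>M * m / 2 * s) has_real_derivative v$2 + \<delta>M * m / 2 * 1) (at t)"
    by (intro DERIV_add DERIV_cmult has_real_derivative_vec_nth d DERIV_ident)
  moreover have "v$2 + \<delta>M * m / 2 * 1 \<le> 0"
  proof -
    have "t \<in> I" using filippov_solution_atLeastAtMost_subset[OF sol \<open>p \<in> I\<close> \<open>q \<in> I\<close>] t by auto
    then have "z t $ 2 \<ge> m" "z t $ 1 \<le> z p $ 1"
      using males_antimono[OF sol \<open>0 \<in> I\<close> \<open>z 0 \<in> MM\<close> _ \<open>q \<in> I\<close>, of t]
        eggs_antimono[OF sol \<open>0 \<in> I\<close> \<open>z 0 \<in> MM\<close> \<open>p \<in> I\<close>, of t] t \<open>0 \<le> p\<close> \<open>z q $ 2 \<ge> m\<close>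
      by auto
    then have "c * z t $ 1 \<le> c * z p $ 1" "\<delta>M * m \<le> \<delta>M * z t $ 2"
      using c_pos pos(4) by simp_all
    then show ?thesis using v \<open>c * z p $ 1 \<le> \<delta>M * m / 2\<close> by (simp add: g3_def)
  qed
  ultimately show "\<exists>d. ((\<lambda>s. z s $ 2 + \<delta>M * m / 2 * s) has_real_derivative d) (at t) \<and> d \<le> 0"
    by blast
qed

lemma sterile_males_exp_antimono:
  assumes sol: "filippov_solution X Dprime I z" and "0 \<in> I" "z 0 \<in> MM"
    and "p \<in> I" "q \<in> I" "0 \<le> p" "p \<le> q" and "z p $ 2 \<le> m"
  shows "exp (\<delta>s * q) * (z q $ 4 - lam * m / \<delta>s) \<le> exp (\<delta>s * p) * (z p $ 4 - lam * m / \<delta>s)"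
proof (rule nonincreasing_along_MM[OF assms(1-7)])
  show "lipschitz_at (\<lambda>s. exp (\<delta>s * s) * (z s $ 4 - lam * m / \<delta>s)) {p..q} t" if "t \<in> {p..q}" for t
    by (intro lipschitz_at_mult lipschitz_at_diff lipschitz_at_const
        lipschitz_at_solution_component[OF sol \<open>p \<in> I\<close> \<open>q \<in> I\<close> that]
        has_real_derivative_imp_lipschitz_at[of _ "exp (\<delta>s * t) * \<delta>s"])
      (auto intro!: derivative_eq_intros)
  fix t v assume t: "t \<in> {p<..<q}" and d: "(z has_vector_derivative v) (at t)"
    and v: "v$4 = lam * z t $ 2 - \<delta>s * z t $ 4"
  have "((\<lambda>s. exp (\<delta>s * s)) has_real_derivative exp (\<delta>s * t) * \<delta>s) (at t)"
    by (auto intro!: derivative_eq_intros)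
  from DERIV_mult[OF this DERIV_diff[OF has_real_derivative_vec_nth[OF d, of 4] DERIV_const]]
  have "((\<lambda>s. exp (\<delta>s * s) * (z s $ 4 - lam * m / \<delta>s)) has_real_derivative
      exp (\<delta>s * t) * \<delta>s * (z t $ 4 - lam * m / \<delta>s) + (v$4 - 0) * exp (\<delta>s * t)) (at t)" .
  moreover have "exp (\<delta>s * t) * \<delta>s * (z t $ 4 - lam * m / \<delta>s) + (v$4 - 0) * exp (\<delta>s * t)
      = exp (\<delta>s * t) * (lam * (z t $ 2 - m))"
    using pos(6) by (simp add: v field_simps)
  moreover have "z t $ 2 \<le> m"
  proof -
    have "t \<in> I" using filippov_solution_atLeastAtMost_subset[OF sol \<open>p \<in> I\<close> \<open>q \<in> I\<close>] t by auto
    then show ?thesis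
      using males_antimono[OF sol \<open>0 \<in> I\<close> \<open>z 0 \<in> MM\<close> \<open>p \<in> I\<close>, of t] t \<open>0 \<le> p\<close> \<open>z p $ 2 \<le> m\<close>
      by auto
  qed
  then have "exp (\<delta>s * t) * (lam * (z t $ 2 - m)) \<le> 0"
    using lam_pos by (simp add: mult_nonneg_nonpos)
  ultimately show "\<exists>d. ((\<lambda>s. exp (\<delta>s * s) * (z s $ 4 - lam * m / \<delta>s)) has_real_derivative d) (at t)
      \<and> d \<le> 0"
    by auto
qed

lemma solution_nonneg:
  assumes "filippov_solution X Dprime I z" "t \<in> I"
  shows "z t $ 1 \<ge> 0" "z t $ 2 \<ge> 0" "z t $ 3 \<ge> 0" "z t $ 4 \<ge> 0"
  using filippov_solutionD(3)[OF assms] by (simp_all add: Dprime_def)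

lemma eggs_eventually_lt:
  assumes sol: "filippov_solution X Dprime {0..} z" and "z 0 \<in> MM" "e > 0"
  shows "\<forall>\<^sub>F t in at_top. z t $ 1 < e"
proof -
  have "\<exists>T\<ge>0. z T $ 1 < e"
  proof (rule ccontr)
    assume "\<not> (\<exists>T\<ge>0. z T $ 1 < e)"
    then have above: "z T $ 1 \<ge> e" if "T \<ge> 0" for T using that by force
    define R where "R = z 0 $ 1 + K / e * (z 0 $ 1 + \<beta>E / \<delta>F * z 0 $ 3)"
    define T where "T = R / (a * e) + 1"
    have "R \<ge> 0" using solution_nonneg[OF sol, of 0] \<open>e > 0\<close> pos by (simp add: R_def)
    then have "T \<ge> 0" using a_pos \<open>e > 0\<close> by (simp add: T_def)
    then have "z T $ 1 + K / e * (z T $ 1 + \<beta>E / \<delta>F * z T $ 3) + a * e * T \<le> R + a * e * 0"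
      unfolding R_def using above[OF \<open>T \<ge> 0\<close>] \<open>e > 0\<close> \<open>z 0 \<in> MM\<close>
      by (intro eggs_dissipation_antimono[OF sol]) auto
    moreover have "z T $ 1 + K / e * (z T $ 1 + \<beta>E / \<delta>F * z T $ 3) \<ge> 0"
      using solution_nonneg[OF sol, of T] \<open>T \<ge> 0\<close> \<open>e > 0\<close> pos by simp
    moreover have "a * e * T = R + a * e" "a * e > 0"
      using a_pos \<open>e > 0\<close> by (simp_all add: T_def field_simps)
    ultimately show False by linarith
  qed
  then obtain T where "T \<ge> 0" "z T $ 1 < e" by blast
  then have "z t $ 1 < e" if "t \<ge> T" for t
    using eggs_antimono[OF sol _ \<open>z 0 \<in> MM\<close>, of T t] that by force
  then show ?thesis unfolding eventually_at_top_linorder by blast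
qed

lemma males_eventually_lt:
  assumes sol: "filippov_solution X Dprime {0..} z" and "z 0 \<in> MM" "m > 0"
  shows "\<forall>\<^sub>F t in at_top. z t $ 2 < m"
proof -
  have "\<delta>M * m / (2 * c) > 0" using \<open>m > 0\<close> pos c_pos by simp
  from eventually_conj[OF eggs_eventually_lt[OF sol \<open>z 0 \<in> MM\<close> this] eventually_ge_at_top[of 0]]
  obtain T0 where "T0 \<ge> 0" "z T0 $ 1 < \<delta>M * m / (2 * c)"
    unfolding eventually_at_top_linorder by auto
  then have small_eggs: "c * z T0 $ 1 \<le> \<delta>M * m / 2" using c_pos by (simp add: field_simps)
  have "\<exists>T\<ge>T0. z T $ 2 < m"
  proof (rule ccontr)
    assume "\<not> (\<exists>T\<ge>T0. z T $ 2 < m)"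
    then have above: "z T $ 2 \<ge> m" if "T \<ge> T0" for T using that by force
    define T where "T = T0 + 2 * z T0 $ 2 / (\<delta>M * m) + 1"
    have "T \<ge> T0" using solution_nonneg[OF sol, of T0] \<open>T0 \<ge> 0\<close> pos \<open>m > 0\<close> by (simp add: T_def)
    then have "z T $ 2 + \<delta>M * m / 2 * T \<le> z T0 $ 2 + \<delta>M * m / 2 * T0"
      using above \<open>T0 \<ge> 0\<close> \<open>m > 0\<close> \<open>z 0 \<in> MM\<close> small_eggs
      by (intro males_dissipation_antimono[OF sol]) auto
    moreover have "z T $ 2 \<ge> 0" using solution_nonneg[OF sol, of T] \<open>T \<ge> T0\<close> \<open>T0 \<ge> 0\<close> by simp
    moreover have "\<delta>M * m / 2 * T = \<delta>M * m / 2 * T0 + z T0 $ 2 + \<delta>M * m / 2" "\<delta>M * m / 2 > 0"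
      using pos \<open>m > 0\<close> by (simp_all add: T_def field_simps)
    ultimately show False by linarith
  qed
  then obtain T where "T \<ge> T0" "z T $ 2 < m" by blast
  then have "z t $ 2 < m" if "t \<ge> T" for t
    using males_antimono[OF sol _ \<open>z 0 \<in> MM\<close>, of T t] that \<open>T0 \<ge> 0\<close> by force
  then show ?thesis unfolding eventually_at_top_linorder by blast
qed

text \<open>On \<open>MM\<close> the inequality defining \<open>T1\<close> caps the females by the eggs once \<open>E \<le> K / 2\<close>.\<close>
lemma females_eventually_lt:
  assumes sol: "filippov_solution X Dprime {0..} z" and "z 0 \<in> MM" "e > 0"
  shows "\<forall>\<^sub>F t in at_top. z t $ 3 < e"
proof -
  have "min (K / 2) (e * \<beta>E / (2 * a)) > 0" using \<open>e > 0\<close> pos a_pos by simp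
  from eventually_conj[OF eggs_eventually_lt[OF sol \<open>z 0 \<in> MM\<close> this] eventually_ge_at_top[of 0]]
  show ?thesis
  proof eventually_elim
    case (elim t)
    then have "z t \<in> MM" using MM_invariant[OF sol _ \<open>z 0 \<in> MM\<close>, of t] by simp
    have "z t $ 3 \<ge> 0" using solution_nonneg[OF sol, of t] elim by simp
    have "1 - z t $ 1 / K \<ge> 1 / 2" using elim pos(7) by (simp add: field_simps)
    then have "\<beta>E * z t $ 3 * (1 / 2) \<le> \<beta>E * z t $ 3 * (1 - z t $ 1 / K)"
      using \<open>z t $ 3 \<ge> 0\<close> pos by (intro mult_left_mono) auto
    also have "\<dots> \<le> a * z t $ 1" using \<open>z t \<in> MM\<close> by (simp add: mem_MM_iff g1_def)
    also have "\<dots> < a * (e * \<beta>E / (2 * a))" using elim a_pos by (intro mult_strict_left_mono) auto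
    also have "\<dots> = \<beta>E * e * (1 / 2)" using a_pos by simp
    finally show "z t $ 3 < e" using pos by simp
  qed
qed

lemma sterile_males_eventually_lt:
  assumes sol: "filippov_solution X Dprime {0..} z" and "z 0 \<in> MM" "m > 0"
  shows "\<forall>\<^sub>F t in at_top. z t $ 4 < m"
proof -
  define m' where "m' = m * \<delta>s / (2 * lam)"
  have "m' > 0" "lam * m' / \<delta>s = m / 2" using \<open>m > 0\<close> pos lam_pos by (simp_all add: m'_def)
  from eventually_conj[OF males_eventually_lt[OF sol \<open>z 0 \<in> MM\<close> \<open>m' > 0\<close>] eventually_ge_at_top[of 0]]
  obtain T where "T \<ge> 0" "z T $ 2 < m'" unfolding eventually_at_top_linorder by auto
  have "((\<lambda>t. exp (- \<delta>s * (t - T)) * z T $ 4) \<longlongrightarrow> 0) at_top"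
    using pos(6) by real_asymp
  then have "\<forall>\<^sub>F t in at_top. exp (- \<delta>s * (t - T)) * z T $ 4 < m / 2"
    using \<open>m > 0\<close> by (intro order_tendstoD(2)) auto
  from eventually_conj[OF this eventually_ge_at_top[of T]]
  show ?thesis
  proof eventually_elim
    case (elim t)
    have "exp (\<delta>s * t) * (z t $ 4 - m / 2) \<le> exp (\<delta>s * T) * (z T $ 4 - m / 2)"
      using sterile_males_exp_antimono[OF sol _ \<open>z 0 \<in> MM\<close>, of T t m'] elim \<open>T \<ge> 0\<close> \<open>z T $ 2 < m'\<close>
      unfolding \<open>lam * m' / \<delta>s = m / 2\<close> by simp
    also have "\<dots> \<le> exp (\<delta>s * T) * z T $ 4" using \<open>m > 0\<close> by simp
    finally have "z t $ 4 - m / 2 \<le> exp (- \<delta>s * (t - T)) * z T $ 4"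
      by (simp add: exp_diff algebra_simps field_simps)
    then show "z t $ 4 < m" using elim by linarith
  qed
qed

lemma solution_tendsto_0:
  assumes sol: "filippov_solution X Dprime {0..} z" and "z 0 \<in> MM"
  shows "(z \<longlongrightarrow> 0) at_top"
proof (rule Lim_null_comparison)
  have "((\<lambda>t. z t $ i) \<longlongrightarrow> 0) at_top" if "i \<in> {1, 2, 3, 4}" for i
  proof (rule order_tendstoI)
    show "\<forall>\<^sub>F t in at_top. e < z t $ i" if "e < 0" for e :: real
      using eventually_ge_at_top[of 0]
      by eventually_elim (use solution_nonneg[OF sol] \<open>e < 0\<close> \<open>i \<in> {1, 2, 3, 4}\<close> in force)
  next
    show "\<forall>\<^sub>F t in at_top. z t $ i < e" if "0 < e" for e :: real
      using \<open>i \<in> {1, 2, 3, 4}\<close> eggs_eventually_lt males_eventually_lt females_eventually_lt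
        sterile_males_eventually_lt sol \<open>z 0 \<in> MM\<close> \<open>e > 0\<close> by auto
  qed
  then show "((\<lambda>t. z t $ 1 + z t $ 2 + z t $ 3 + z t $ 4) \<longlongrightarrow> 0) at_top"
    by (intro tendsto_add_zero) auto
  show "\<forall>\<^sub>F t in at_top. norm (z t) \<le> z t $ 1 + z t $ 2 + z t $ 3 + z t $ 4"
    using eventually_ge_at_top[of 0]
    by eventually_elim (use norm_le_sum_components filippov_solutionD(3)[OF sol] in auto)
qed

lemma females_bound:
  assumes sol: "filippov_solution X Dprime I z" and "0 \<in> I" "z 0 \<in> MM" "t \<in> I" "t \<ge> 0"
  shows "z t $ 3 \<le> \<delta>F / \<beta>E * z 0 $ 1 + z 0 $ 3"
proof -
  have "\<beta>E / \<delta>F * z t $ 3 \<le> z 0 $ 1 + \<beta>E / \<delta>F * z 0 $ 3"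
    using weighted_sum_antimono[OF sol \<open>0 \<in> I\<close> \<open>z 0 \<in> MM\<close> \<open>0 \<in> I\<close> \<open>t \<in> I\<close> order_refl \<open>t \<ge> 0\<close>]
      solution_nonneg[OF sol \<open>t \<in> I\<close>] by linarith
  then show ?thesis using pos by (simp add: field_simps)
qed

lemma sterile_males_bound:
  assumes sol: "filippov_solution X Dprime I z" and "0 \<in> I" "z 0 \<in> MM" "t \<in> I" "t \<ge> 0"
  shows "z t $ 4 \<le> lam / \<delta>s * z 0 $ 2 + z 0 $ 4"
proof -
  define c' where "c' = lam * z 0 $ 2 / \<delta>s"
  have "c' \<ge> 0" using solution_nonneg[OF sol \<open>0 \<in> I\<close>] lam_pos pos by (simp add: c'_def)
  have "exp (\<delta>s * t) * (z t $ 4 - c') \<le> exp (\<delta>s * 0) * (z 0 $ 4 - c')"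
    unfolding c'_def
    by (rule sterile_males_exp_antimono[OF sol \<open>0 \<in> I\<close> \<open>z 0 \<in> MM\<close> \<open>0 \<in> I\<close> \<open>t \<in> I\<close> order_refl
          \<open>t \<ge> 0\<close> order_refl])
  then have decay: "exp (\<delta>s * t) * (z t $ 4 - c') \<le> z 0 $ 4 - c'" by simp
  have "z t $ 4 - c' \<le> z 0 $ 4"
  proof (cases "z t $ 4 - c' \<le> 0")
    case True
    then show ?thesis using solution_nonneg(4)[OF sol \<open>0 \<in> I\<close>] by linarith
  next
    case False
    moreover have "exp (\<delta>s * t) \<ge> 1" using pos \<open>t \<ge> 0\<close> by simp
    ultimately have "z t $ 4 - c' \<le> exp (\<delta>s * t) * (z t $ 4 - c')"
      using mult_right_mono[of 1 "exp (\<delta>s * t)" "z t $ 4 - c'"] by simp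
    then show ?thesis using decay \<open>c' \<ge> 0\<close> by linarith
  qed
  then show ?thesis by (simp add: c'_def)
qed

lemma solution_norm_le:
  assumes sol: "filippov_solution X Dprime I z" and "0 \<in> I" "z 0 \<in> MM" "t \<in> I" "t \<ge> 0"
  shows "norm (z t) \<le> (4 + \<delta>F / \<beta>E + lam / \<delta>s) * norm (z 0)"
proof -
  define n0 where "n0 = norm (z 0)"
  have le_n0: "z 0 $ i \<le> n0" for i using component_le_norm_cart[of "z 0" i] by (simp add: n0_def)
  have "norm (z t) \<le> z t $ 1 + z t $ 2 + z t $ 3 + z t $ 4"
    using norm_le_sum_components filippov_solutionD(3)[OF sol \<open>t \<in> I\<close>] by blast
  also have "\<dots> \<le> z 0 $ 1 + z 0 $ 2 + (\<delta>F / \<beta>E * z 0 $ 1 + z 0 $ 3) + (lam / \<delta>s * z 0 $ 2 + z 0 $ 4)"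
    using eggs_antimono[OF sol \<open>0 \<in> I\<close> \<open>z 0 \<in> MM\<close> \<open>0 \<in> I\<close> \<open>t \<in> I\<close> order_refl \<open>t \<ge> 0\<close>]
      males_antimono[OF sol \<open>0 \<in> I\<close> \<open>z 0 \<in> MM\<close> \<open>0 \<in> I\<close> \<open>t \<in> I\<close> order_refl \<open>t \<ge> 0\<close>]
      females_bound[OF assms] sterile_males_bound[OF assms] by linarith
  also have "\<dots> \<le> n0 + n0 + (\<delta>F / \<beta>E * n0 + n0) + (lam / \<delta>s * n0 + n0)"
    using le_n0 pos lam_pos by (intro add_mono mult_left_mono order.refl) auto
  finally show ?thesis by (simp add: n0_def algebra_simps)
qed

lemma positively_invariant_MM: "positively_invariant X Dprime MM"
  unfolding positively_invariant_def using MM_invariant by blast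

lemma GAS_in_MM: "GAS_in X Dprime MM"
  unfolding GAS_in_def
proof (intro conjI allI impI)
  fix \<epsilon> :: real assume "\<epsilon> > 0"
  define C where "C = 4 + \<delta>F / \<beta>E + lam / \<delta>s"
  have "C > 0" using pos lam_pos by (simp add: C_def add_pos_nonneg)
  show "\<exists>\<delta>>0. \<forall>I z. filippov_solution X Dprime I z \<and> 0 \<in> I \<and> z 0 \<in> MM \<and> norm (z 0) < \<delta> \<longrightarrow>
      (\<forall>t\<in>I. t > 0 \<longrightarrow> norm (z t) < \<epsilon>)"
  proof (intro exI[of _ "\<epsilon> / C"] conjI allI impI ballI)
    fix I z t assume "filippov_solution X Dprime I z \<and> 0 \<in> I \<and> z 0 \<in> MM \<and> norm (z 0) < \<epsilon> / C"
      and "t \<in> I" "t > 0"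
    then have "norm (z t) \<le> C * norm (z 0)" "norm (z 0) < \<epsilon> / C"
      using solution_norm_le[of I z t] unfolding C_def by auto
    then show "norm (z t) < \<epsilon>" using \<open>C > 0\<close> by (simp add: field_simps)
  qed (use \<open>\<epsilon> > 0\<close> \<open>C > 0\<close> in simp)
qed (use solution_tendsto_0 in blast)

end

theorem theorem7:
  fixes \<beta>E \<nu>E \<delta>E \<delta>M \<delta>F \<delta>s K \<nu> \<gamma>s lam :: real
  assumes "\<beta>E > 0" "\<nu>E > 0" "\<delta>E > 0" "\<delta>M > 0" "\<delta>F > 0" "\<delta>s > 0" "K > 0"
    and "0 < \<nu>" "\<nu> < 1" and "0 < \<gamma>s" "\<gamma>s \<le> 1" and "\<delta>s \<ge> \<delta>M"
    and R0: "\<beta>E * \<nu> * \<nu>E / (\<delta>F * (\<nu>E + \<delta>E)) > 1"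
    and lam: "lam > ((\<beta>E * \<nu> * \<nu>E - (\<nu>E + \<delta>E) * \<delta>F) * \<delta>s) / (\<gamma>s * (\<nu>E + \<delta>E) * \<delta>F)"
  defines "\<kappa>bar \<equiv> \<gamma>s * \<delta>F * (\<nu>E + \<delta>E) / (\<beta>E * \<nu> * \<nu>E - \<delta>F * (\<nu>E + \<delta>E))"
  defines "X \<equiv> closed_loop \<beta>E \<nu>E \<delta>E \<delta>M \<delta>F \<delta>s K \<nu> \<gamma>s lam"
  defines "MM \<equiv> Mset \<beta>E \<nu>E \<delta>E \<delta>M K \<nu> \<kappa>bar"
  shows "positively_invariant X Dprime MM \<and> GAS_in X Dprime MM"
proof -
  have "\<delta>F * (\<nu>E + \<delta>E) > 0" "\<gamma>s * (\<nu>E + \<delta>E) * \<delta>F > 0" using assms by simp_all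
  then have "\<beta>E * \<nu> * \<nu>E > \<delta>F * (\<nu>E + \<delta>E)"
    and "lam * (\<gamma>s * \<delta>F * (\<nu>E + \<delta>E)) > \<delta>s * (\<beta>E * \<nu> * \<nu>E - \<delta>F * (\<nu>E + \<delta>E))"
    using R0 lam by (simp_all add: less_divide_eq divide_less_eq algebra_simps)
  then interpret model: sterile_insect_model \<beta>E \<nu>E \<delta>E \<delta>M \<delta>F \<delta>s K \<nu> \<gamma>s lam
    using assms by unfold_locales auto
  have "X = model.X" "MM = model.MM"
    by (simp_all add: X_def model.X_def MM_def model.MM_def \<kappa>bar_def model.\<kappa>_def model.a_def)
  then show ?thesis using model.positively_invariant_MM model.GAS_in_MM by simp
qed

end
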